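(* Let $n\ge3$, let $U$ be the cyclic shift on $\mathbb C^n$ given by $Ue_k=e_{k+1}$ (indices mod $n$), and let $T=U+I$. Then \[\|T\|_m=\frac2n\sum_{k=0}^{n-1}\Big|\cos\frac{k\pi}n\Big|=\begin{cases}\dfrac{2\cos(\frac\pi{2n})}{n\sin(\frac\pi{2n})}& n\text{ even},\\[2ex]\dfrac{2}{n\sin(\frac\pi{2n})}& n\text{ odd}.\end{cases}\] Consequently $\|T\|_m\to 4/\pi$ as $n\to\infty$, the values for odd $n$ decreasing to $4/\pi$ and the values for even $n$ increasing to $4/\pi$.
   Context: $\|T\|_m$ is the norm of the Schur multiplier $R=[r_{ij}]\mapsto[t_{ij}r_{ij}]$ on $n\times n$ complex matrices with the operator norm, where $[t_{ij}]$ is the matrix of $T$ in the standard basis $e_1,\dots,e_n$. *)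

theory Defs
  imports Complex_Main
begin

text \<open>n x n complex matrices are represented as functions nat => nat => complex,
  only entries with indices < n being relevant; vectors in C^n as nat => complex.\<close>

definition vec_norm :: "nat \<Rightarrow> (nat \<Rightarrow> complex) \<Rightarrow> real" where
  "vec_norm n v = sqrt (\<Sum>i<n. (cmod (v i))\<^sup>2)"

definition mat_apply :: "nat \<Rightarrow> (nat \<Rightarrow> nat \<Rightarrow> complex) \<Rightarrow> (nat \<Rightarrow> complex) \<Rightarrow> (nat \<Rightarrow> complex)" where
  "mat_apply n A v = (\<lambda>i. \<Sum>j<n. A i j * v j)"

definition op_norm :: "nat \<Rightarrow> (nat \<Rightarrow> nat \<Rightarrow> complex) \<Rightarrow> real" where
  "op_norm n A = Sup {vec_norm n (mat_apply n A v) | v. vec_norm n v \<le> 1}"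

definition schur_mult_norm :: "nat \<Rightarrow> (nat \<Rightarrow> nat \<Rightarrow> complex) \<Rightarrow> real" where
  "schur_mult_norm n T = Sup {op_norm n (\<lambda>i j. T i j * R i j) | R. op_norm n R \<le> 1}"

text \<open>Matrix of T = U + I where U e_k = e_{(k+1) mod n} (indices 0..n-1).\<close>
definition shift_plus_id :: "nat \<Rightarrow> nat \<Rightarrow> nat \<Rightarrow> complex" where
  "shift_plus_id n i j = (if i = (j + 1) mod n then 1 else 0) + (if i = j then 1 else 0)"

end

theory Submission
  imports Defs "HOL-Analysis.L2_Norm" "HOL-Real_Asymp.Real_Asymp"
begin

text \<open>
  With \<omega> = exp(2\<pi>i/n), the matrix of T is the circulant t_ij = \<Sum>_k c_k \<omega>^(k(i-j)) with
  c_k = (1 + \<omega>^(-k))/n. Hence the Schur multiplier by T is R \<mapsto> \<Sum>_k c_k D_k R D_k^* with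
  unitary diagonals D_k = diag(\<omega>^(ki)), and its norm is at most \<Sum>_k |c_k|. The bound is
  attained at the contraction R that the discrete Fourier transform diagonalises with
  eigenvalues sgn(conj c_k): the entries of T \<circ> R sum to n \<Sum>_k |c_k|, while testing against
  the all-ones vector bounds the entry sum of any matrix M by n \<parallel>M\<parallel>. Finally
  |c_k| = (2/n) |cos(k\<pi>/n)|, the sum of these is a Dirichlet kernel, and the monotonicity
  in n reduces to that of sin x / x and x cot x on (0, \<pi>/2].
\<close>

section \<open>Roots of unity\<close>

definition omega :: "nat \<Rightarrow> real \<Rightarrow> complex" where
  "omega n t = cis (2 * pi * t / real n)"

lemma omega_add: "omega n (a + b) = omega n a * omega n b"
  unfolding omega_def by (simp add: cis_mult add_divide_distrib distrib_left)

lemma cnj_omega: "cnj (omega n t) = omega n (- t)"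
  unfolding omega_def by (simp add: cis_cnj)

lemma norm_omega [simp]: "cmod (omega n t) = 1"
  unfolding omega_def by simp

lemma omega_int_multiple:
  assumes "n > 0"
  shows "omega n (real n * of_int d) = 1"
proof -
  have "omega n (real n * of_int d) = cis (2 * pi * of_int d)"
    unfolding omega_def using assms by (simp add: field_simps)
  also have "\<dots> = 1" by (rule cis_multiple_2pi) simp
  finally show ?thesis .
qed

lemma sum_omega:
  assumes n: "n > 0"
  shows "(\<Sum>k<n. omega n (real k * of_int d)) = (if int n dvd d then of_nat n else 0)"
proof -
  define z where "z = omega n (of_int d)"
  have powers: "omega n (real k * of_int d) = z ^ k" for k
    unfolding z_def omega_def DeMoivre by (simp add: algebra_simps)
  show ?thesis
  proof (cases "int n dvd d")
    case True
    then obtain q where "d = int n * q" by blast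
    then have "z = 1" using omega_int_multiple[OF n, of q] unfolding z_def by simp
    then show ?thesis using True by (simp add: powers)
  next
    case False
    have "z ^ n = 1" using omega_int_multiple[OF n, of d] by (simp add: powers)
    moreover have "z \<noteq> 1"
    proof
      assume "z = 1"
      then have "cos (2 * pi * of_int d / real n) = 1" unfolding z_def omega_def
        by (metis cis.sel(1) one_complex.simps(1))
      then obtain m :: int where "2 * pi * of_int d / real n = of_int m * 2 * pi"
        by (auto simp: cos_one_2pi_int)
      then have "of_int d = real n * of_int m" using n by (simp add: field_simps)
      then have "d = int n * m" by (metis of_int_eq_iff of_int_mult of_int_of_nat_eq)
      then show False using False by simp
    qed
    ultimately show ?thesis using False by (simp add: powers sum_gp_strict)
  qed
qed

lemma int_dvd_diff_iff_eq: "i < n \<Longrightarrow> j < n \<Longrightarrow> int n dvd (int i - int j) \<longleftrightarrow> i = j"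
  by (metis mod_eq_dvd_iff mod_less of_nat_mod of_nat_eq_iff)

lemma int_dvd_diff_1_iff_eq_Suc_mod:
  assumes "i < n" "j < n"
  shows "int n dvd (int i - int j - 1) \<longleftrightarrow> i = (j + 1) mod n"
proof -
  have "int i - int j - 1 = int i - int (j + 1)" by simp
  then show ?thesis using assms
    by (metis mod_eq_dvd_iff mod_less of_nat_mod of_nat_eq_iff)
qed

lemma omega_orthogonal:
  assumes "m < n" "m' < n"
  shows "(\<Sum>i<n. omega n (real i * real m) * cnj (omega n (real i * real m'))) =
    (if m = m' then of_nat n else 0)"
proof -
  have "(\<Sum>i<n. omega n (real i * real m) * cnj (omega n (real i * real m'))) =
        (\<Sum>i<n. omega n (real i * of_int (int m - int m')))"
    by (rule sum.cong) (auto simp: cnj_omega omega_add[symmetric] algebra_simps)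
  also have "\<dots> = (if int n dvd (int m - int m') then of_nat n else 0)"
    using assms by (intro sum_omega) simp
  also have "int n dvd (int m - int m') \<longleftrightarrow> m = m'"
    using assms by (rule int_dvd_diff_iff_eq)
  finally show ?thesis .
qed

lemma dft_parseval:
  assumes n: "n > 0"
  shows "(\<Sum>i<n. (cmod (\<Sum>m<n. a m * omega n (real i * real m)))\<^sup>2) = real n * (\<Sum>m<n. (cmod (a m))\<^sup>2)"
proof -
  define E where "E i m = omega n (real i * real m)" for i m
  have "complex_of_real (\<Sum>i<n. (cmod (\<Sum>m<n. a m * E i m))\<^sup>2) =
     (\<Sum>i<n. (\<Sum>m<n. a m * E i m) * cnj (\<Sum>m<n. a m * E i m))"
    unfolding of_real_sum by (rule sum.cong[OF refl]) (rule complex_norm_square)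
  also have "\<dots> = (\<Sum>i<n. \<Sum>m<n. \<Sum>m'<n. a m * cnj (a m') * (E i m * cnj (E i m')))"
    by (simp add: sum_product cnj_sum mult_ac)
  also have "\<dots> = (\<Sum>m<n. \<Sum>m'<n. a m * cnj (a m') * (\<Sum>i<n. E i m * cnj (E i m')))"
    by (subst sum.swap, rule sum.cong[OF refl], subst sum.swap) (simp add: sum_distrib_left)
  also have "\<dots> = (\<Sum>m<n. \<Sum>m'<n. a m * cnj (a m') * (if m = m' then of_nat n else 0))"
    unfolding E_def by (intro sum.cong refl) (simp add: omega_orthogonal)
  also have "\<dots> = (\<Sum>m<n. of_nat n * complex_of_real ((cmod (a m))\<^sup>2))"
    by (intro sum.cong refl) (simp add: if_distrib complex_norm_square mult_ac del: of_real_power cong: if_cong)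
  also have "\<dots> = complex_of_real (real n * (\<Sum>m<n. (cmod (a m))\<^sup>2))"
    by (simp add: sum_distrib_left)
  finally show ?thesis unfolding E_def by (simp only: of_real_eq_iff)
qed

section \<open>Euclidean and operator norms\<close>

lemma vec_norm_L2_set: "vec_norm n v = L2_set (\<lambda>i. cmod (v i)) {..<n}"
  unfolding vec_norm_def L2_set_def by simp

lemma vec_norm_nonneg [simp]: "0 \<le> vec_norm n v"
  unfolding vec_norm_L2_set by simp

lemma vec_norm_cong: "(\<And>i. i < n \<Longrightarrow> v i = w i) \<Longrightarrow> vec_norm n v = vec_norm n w"
  unfolding vec_norm_def by simp

lemma vec_norm_power2: "(vec_norm n v)\<^sup>2 = (\<Sum>i<n. (cmod (v i))\<^sup>2)"
  unfolding vec_norm_def by (simp add: sum_nonneg)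

lemma vec_norm_zero [simp]: "vec_norm n (\<lambda>i. 0) = 0"
  unfolding vec_norm_def by simp

lemma vec_norm_const_1: "vec_norm n (\<lambda>i. 1) = sqrt (real n)"
  unfolding vec_norm_def by simp

lemma vec_norm_eq_0_imp: "vec_norm n v = 0 \<Longrightarrow> i < n \<Longrightarrow> v i = 0"
  unfolding vec_norm_L2_set by (subst (asm) L2_set_eq_0_iff) auto

lemma norm_le_vec_norm: "j < n \<Longrightarrow> cmod (v j) \<le> vec_norm n v"
  unfolding vec_norm_L2_set by (rule member_le_L2_set) auto

lemma vec_norm_add_le: "vec_norm n (\<lambda>i. v i + w i) \<le> vec_norm n v + vec_norm n w"
proof -
  have "vec_norm n (\<lambda>i. v i + w i) \<le> L2_set (\<lambda>i. cmod (v i) + cmod (w i)) {..<n}"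
    unfolding vec_norm_L2_set by (rule L2_set_mono) (auto simp: norm_triangle_ineq)
  also have "\<dots> \<le> vec_norm n v + vec_norm n w"
    unfolding vec_norm_L2_set by (rule L2_set_triangle_ineq)
  finally show ?thesis .
qed

lemma vec_norm_sum_le: "vec_norm n (\<lambda>i. \<Sum>k\<in>K. f k i) \<le> (\<Sum>k\<in>K. vec_norm n (f k))"
proof (induction K rule: infinite_finite_induct)
  case (insert x F)
  have "vec_norm n (\<lambda>i. \<Sum>k\<in>insert x F. f k i) = vec_norm n (\<lambda>i. f x i + (\<Sum>k\<in>F. f k i))"
    using insert by simp
  also have "\<dots> \<le> vec_norm n (f x) + vec_norm n (\<lambda>i. \<Sum>k\<in>F. f k i)"
    by (rule vec_norm_add_le)
  also have "\<dots> \<le> vec_norm n (f x) + (\<Sum>k\<in>F. vec_norm n (f k))"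
    using insert by simp
  finally show ?case using insert by simp
qed simp_all

lemma vec_norm_scale: "vec_norm n (\<lambda>i. c * v i) = cmod c * vec_norm n v"
  unfolding vec_norm_L2_set by (simp add: L2_set_right_distrib norm_mult)

lemma vec_norm_unimodular_mult:
  "(\<And>i. cmod (u i) = 1) \<Longrightarrow> vec_norm n (\<lambda>i. u i * v i) = vec_norm n v"
  unfolding vec_norm_def by (simp add: norm_mult)

lemma mat_apply_scale: "mat_apply n A (\<lambda>j. c * v j) = (\<lambda>i. c * mat_apply n A v i)"
  unfolding mat_apply_def by (auto simp: sum_distrib_left algebra_simps)

lemma vec_norm_mat_apply_le_sum_norm:
  "vec_norm n (mat_apply n A v) \<le> (\<Sum>i<n. \<Sum>j<n. cmod (A i j)) * vec_norm n v"
proof -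
  have "vec_norm n (mat_apply n A v) \<le> (\<Sum>i<n. cmod (mat_apply n A v i))"
    unfolding vec_norm_L2_set by (rule L2_set_le_sum) simp
  also have "\<dots> \<le> (\<Sum>i<n. (\<Sum>j<n. cmod (A i j)) * vec_norm n v)"
  proof (rule sum_mono)
    fix i
    have "cmod (mat_apply n A v i) \<le> (\<Sum>j<n. cmod (A i j * v j))"
      unfolding mat_apply_def by (rule norm_sum)
    also have "\<dots> \<le> (\<Sum>j<n. cmod (A i j) * vec_norm n v)"
      by (rule sum_mono) (auto simp: norm_mult intro!: mult_left_mono norm_le_vec_norm)
    finally show "cmod (mat_apply n A v i) \<le> (\<Sum>j<n. cmod (A i j)) * vec_norm n v"
      by (simp add: sum_distrib_right)
  qed
  finally show ?thesis by (simp add: sum_distrib_right)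
qed

lemma bdd_above_op_norm: "bdd_above {vec_norm n (mat_apply n A v) | v. vec_norm n v \<le> 1}"
proof (rule bdd_aboveI)
  fix x assume "x \<in> {vec_norm n (mat_apply n A v) | v. vec_norm n v \<le> 1}"
  then obtain v where v: "x = vec_norm n (mat_apply n A v)" "vec_norm n v \<le> 1" by auto
  have "x \<le> (\<Sum>i<n. \<Sum>j<n. cmod (A i j)) * vec_norm n v"
    using v vec_norm_mat_apply_le_sum_norm by simp
  also have "\<dots> \<le> (\<Sum>i<n. \<Sum>j<n. cmod (A i j))"
    using v by (intro mult_left_le) (auto simp: sum_nonneg)
  finally show "x \<le> (\<Sum>i<n. \<Sum>j<n. cmod (A i j))" .
qed

lemma op_norm_upper: "vec_norm n v \<le> 1 \<Longrightarrow> vec_norm n (mat_apply n A v) \<le> op_norm n A"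
  unfolding op_norm_def by (rule cSup_upper[OF _ bdd_above_op_norm]) auto

lemma op_norm_nonneg: "0 \<le> op_norm n A"
  by (rule order_trans[OF vec_norm_nonneg op_norm_upper[of n "\<lambda>i. 0"]]) simp

lemma op_norm_le:
  assumes "0 \<le> c" "\<And>v. vec_norm n (mat_apply n A v) \<le> c * vec_norm n v"
  shows "op_norm n A \<le> c"
  unfolding op_norm_def
proof (rule cSup_least)
  show "{vec_norm n (mat_apply n A v) | v. vec_norm n v \<le> 1} \<noteq> {}"
    by (auto intro!: exI[of _ "\<lambda>i. 0"])
next
  fix x assume "x \<in> {vec_norm n (mat_apply n A v) | v. vec_norm n v \<le> 1}"
  then obtain v where v: "x = vec_norm n (mat_apply n A v)" "vec_norm n v \<le> 1" by auto
  have "x \<le> c * vec_norm n v" using v assms by simp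
  also have "\<dots> \<le> c" using v assms by (intro mult_left_le) auto
  finally show "x \<le> c" .
qed

lemma vec_norm_mat_apply_le_op_norm: "vec_norm n (mat_apply n A v) \<le> op_norm n A * vec_norm n v"
proof (cases "vec_norm n v = 0")
  case True
  then have "mat_apply n A v = (\<lambda>i. 0)"
    unfolding mat_apply_def using vec_norm_eq_0_imp[OF True] by (auto intro!: ext sum.neutral)
  then show ?thesis using True by simp
next
  case False
  define r where "r = vec_norm n v"
  have r: "r > 0" using False vec_norm_nonneg[of n v] unfolding r_def by linarith
  define w where "w = (\<lambda>j. complex_of_real (1 / r) * v j)"
  have v_eq: "v = (\<lambda>j. complex_of_real r * w j)" unfolding w_def using r by auto
  have "vec_norm n w = 1" unfolding w_def vec_norm_scale using r by (simp add: r_def[symmetric] norm_divide)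
  then have "r * vec_norm n (mat_apply n A w) \<le> r * op_norm n A"
    using r by (intro mult_left_mono op_norm_upper) auto
  moreover have "vec_norm n (mat_apply n A v) = r * vec_norm n (mat_apply n A w)"
    unfolding v_eq mat_apply_scale vec_norm_scale using r by simp
  ultimately show ?thesis unfolding r_def by (simp add: mult.commute)
qed

lemma op_norm_cong:
  assumes "\<And>i j. i < n \<Longrightarrow> j < n \<Longrightarrow> A i j = B i j"
  shows "op_norm n A = op_norm n B"
proof -
  have "vec_norm n (mat_apply n A v) = vec_norm n (mat_apply n B v)" for v
    by (rule vec_norm_cong) (simp add: mat_apply_def assms)
  then show ?thesis unfolding op_norm_def by simp
qed

lemma schur_mult_norm_cong:
  assumes "\<And>i j. i < n \<Longrightarrow> j < n \<Longrightarrow> S i j = T i j"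
  shows "schur_mult_norm n S = schur_mult_norm n T"
proof -
  have "op_norm n (\<lambda>i j. S i j * R i j) = op_norm n (\<lambda>i j. T i j * R i j)" for R
    by (rule op_norm_cong) (simp add: assms)
  then show ?thesis unfolding schur_mult_norm_def by simp
qed

lemma schur_mult_norm_le:
  assumes "\<And>R. op_norm n R \<le> 1 \<Longrightarrow> op_norm n (\<lambda>i j. T i j * R i j) \<le> c"
  shows "schur_mult_norm n T \<le> c"
  unfolding schur_mult_norm_def
proof (rule cSup_least)
  have "op_norm n (\<lambda>i j. 0) \<le> 1"
    using op_norm_le[of 0 n "\<lambda>i j. 0"] by (simp add: mat_apply_def)
  then show "{op_norm n (\<lambda>i j. T i j * R i j) | R. op_norm n R \<le> 1} \<noteq> {}"
    by blast
next
  fix x assume "x \<in> {op_norm n (\<lambda>i j. T i j * R i j) | R. op_norm n R \<le> 1}"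
  then show "x \<le> c" using assms by auto
qed

lemma op_norm_schur_le_schur_mult_norm:
  assumes "\<And>R. op_norm n R \<le> 1 \<Longrightarrow> op_norm n (\<lambda>i j. T i j * R i j) \<le> c"
    and "op_norm n R \<le> 1"
  shows "op_norm n (\<lambda>i j. T i j * R i j) \<le> schur_mult_norm n T"
  unfolding schur_mult_norm_def
proof (rule cSup_upper)
  show "op_norm n (\<lambda>i j. T i j * R i j) \<in> {op_norm n (\<lambda>i j. T i j * R i j) | R. op_norm n R \<le> 1}"
    using assms(2) by auto
  show "bdd_above {op_norm n (\<lambda>i j. T i j * R i j) | R. op_norm n R \<le> 1}"
    using assms(1) by (auto intro!: bdd_aboveI[of _ c])
qed

lemma norm_sum_entries_le_op_norm:
  "cmod (\<Sum>i<n. \<Sum>j<n. M i j) \<le> real n * op_norm n M"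
proof -
  define w where "w = mat_apply n M (\<lambda>j. 1)"
  have "cmod (\<Sum>i<n. \<Sum>j<n. M i j) = cmod (\<Sum>i<n. w i)"
    by (simp add: w_def mat_apply_def)
  also have "\<dots> \<le> (\<Sum>i<n. cmod (w i))" by (rule norm_sum)
  also have "\<dots> = (\<Sum>i<n. \<bar>cmod (w i)\<bar> * \<bar>1\<bar>)" by simp
  also have "\<dots> \<le> L2_set (\<lambda>i. cmod (w i)) {..<n} * L2_set (\<lambda>i. 1) {..<n}"
    by (rule L2_set_mult_ineq)
  also have "\<dots> = vec_norm n w * sqrt (real n)"
    by (simp add: vec_norm_L2_set L2_set_constant)
  also have "\<dots> \<le> op_norm n M * sqrt (real n) * sqrt (real n)"
    unfolding w_def using vec_norm_mat_apply_le_op_norm[of n M "\<lambda>j. 1"]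
    by (intro mult_right_mono) (auto simp: vec_norm_const_1)
  also have "\<dots> = real n * op_norm n M" by simp
  finally show ?thesis .
qed

section \<open>Schur multipliers of circulant matrices\<close>

definition circulant :: "nat \<Rightarrow> (nat \<Rightarrow> complex) \<Rightarrow> nat \<Rightarrow> nat \<Rightarrow> complex" where
  "circulant n c i j = (\<Sum>k<n. c k * omega n (real k * (real i - real j)))"

lemma mat_apply_schur_circulant:
  "mat_apply n (\<lambda>i j. circulant n c i j * R i j) v i =
    (\<Sum>k<n. c k * (omega n (real k * real i) * mat_apply n R (\<lambda>j. omega n (- (real k * real j)) * v j) i))"
proof -
  have "omega n (real k * (real i - real j)) = omega n (real k * real i) * omega n (- (real k * real j))"
    for k j by (simp add: omega_add[symmetric] algebra_simps)
  then have "mat_apply n (\<lambda>i j. circulant n c i j * R i j) v i =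
     (\<Sum>j<n. \<Sum>k<n. c k * (omega n (real k * real i) * (R i j * (omega n (- (real k * real j)) * v j))))"
    unfolding mat_apply_def circulant_def by (simp add: sum_distrib_left sum_distrib_right mult_ac)
  also have "\<dots> = (\<Sum>k<n. c k * (omega n (real k * real i) * mat_apply n R (\<lambda>j. omega n (- (real k * real j)) * v j) i))"
    unfolding mat_apply_def by (subst sum.swap) (simp add: sum_distrib_left)
  finally show ?thesis .
qed

lemma op_norm_schur_circulant_le:
  "op_norm n (\<lambda>i j. circulant n c i j * R i j) \<le> (\<Sum>k<n. cmod (c k)) * op_norm n R"
proof (rule op_norm_le)
  show "0 \<le> (\<Sum>k<n. cmod (c k)) * op_norm n R" by (simp add: sum_nonneg op_norm_nonneg)
  fix v
  define w where "w k = (\<lambda>j. omega n (- (real k * real j)) * v j)" for k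
  have "vec_norm n (mat_apply n (\<lambda>i j. circulant n c i j * R i j) v) =
        vec_norm n (\<lambda>i. \<Sum>k<n. c k * (omega n (real k * real i) * mat_apply n R (w k) i))"
    by (rule vec_norm_cong) (simp add: mat_apply_schur_circulant w_def)
  also have "\<dots> \<le> (\<Sum>k<n. vec_norm n (\<lambda>i. c k * (omega n (real k * real i) * mat_apply n R (w k) i)))"
    by (rule vec_norm_sum_le)
  also have "\<dots> = (\<Sum>k<n. cmod (c k) * vec_norm n (mat_apply n R (w k)))"
    by (simp add: vec_norm_scale vec_norm_unimodular_mult)
  also have "\<dots> \<le> (\<Sum>k<n. cmod (c k) * (op_norm n R * vec_norm n (w k)))"
    by (intro sum_mono mult_left_mono vec_norm_mat_apply_le_op_norm) simp
  also have "\<dots> = (\<Sum>k<n. cmod (c k)) * op_norm n R * vec_norm n v"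
    by (simp add: w_def vec_norm_unimodular_mult sum_distrib_right mult.assoc)
  finally show "vec_norm n (mat_apply n (\<lambda>i j. circulant n c i j * R i j) v) \<le>
      (\<Sum>k<n. cmod (c k)) * op_norm n R * vec_norm n v" .
qed

text \<open>This is F^* diag(l) F for the unitary DFT matrix F.\<close>

definition dft_multiplier :: "nat \<Rightarrow> (nat \<Rightarrow> complex) \<Rightarrow> nat \<Rightarrow> nat \<Rightarrow> complex" where
  "dft_multiplier n l i j = (\<Sum>m<n. l m * omega n (real m * (real j - real i))) / of_nat n"

lemma mat_apply_dft_multiplier:
  "mat_apply n (dft_multiplier n l) v i =
    cnj (\<Sum>m<n. cnj (l m / of_nat n * (\<Sum>j<n. v j * omega n (real m * real j))) * omega n (real i * real m))"
proof -
  have "omega n (real m * (real j - real i)) = omega n (real m * real j) * cnj (omega n (real i * real m))"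
    for m j by (simp add: cnj_omega omega_add[symmetric] algebra_simps)
  then have "mat_apply n (dft_multiplier n l) v i =
      (\<Sum>j<n. \<Sum>m<n. l m / of_nat n * (v j * omega n (real m * real j)) * cnj (omega n (real i * real m)))"
    unfolding mat_apply_def dft_multiplier_def
    by (simp add: sum_divide_distrib sum_distrib_right sum_distrib_left mult_ac)
  also have "\<dots> = (\<Sum>m<n. l m / of_nat n * (\<Sum>j<n. v j * omega n (real m * real j)) * cnj (omega n (real i * real m)))"
    by (subst sum.swap) (simp add: sum_distrib_left sum_distrib_right)
  finally show ?thesis by (simp only: cnj_sum complex_cnj_mult complex_cnj_cnj)
qed

lemma op_norm_dft_multiplier_le:
  assumes n: "n > 0" and l: "\<And>m. m < n \<Longrightarrow> cmod (l m) \<le> 1"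
  shows "op_norm n (dft_multiplier n l) \<le> 1"
proof (rule op_norm_le)
  fix v
  define b where "b m = (\<Sum>j<n. v j * omega n (real m * real j))" for m
  define a where "a m = cnj (l m / of_nat n * b m)" for m
  have "(vec_norm n (mat_apply n (dft_multiplier n l) v))\<^sup>2 =
      (\<Sum>i<n. (cmod (\<Sum>m<n. a m * omega n (real i * real m)))\<^sup>2)"
    unfolding vec_norm_power2 mat_apply_dft_multiplier a_def b_def by (simp only: complex_mod_cnj)
  also have "\<dots> = real n * (\<Sum>m<n. (cmod (a m))\<^sup>2)" by (rule dft_parseval[OF n])
  also have "\<dots> \<le> real n * (\<Sum>m<n. (cmod (b m) / real n)\<^sup>2)"
  proof (intro mult_left_mono sum_mono power_mono)
    fix m assume "m \<in> {..<n}"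
    then have "cmod (l m) * (cmod (b m) / real n) \<le> cmod (b m) / real n"
      using l by (intro mult_left_le_one_le) auto
    then show "cmod (a m) \<le> cmod (b m) / real n"
      unfolding a_def by (simp add: norm_mult norm_divide)
  qed simp_all
  also have "\<dots> = (\<Sum>m<n. (cmod (b m))\<^sup>2) / real n"
    using n by (simp add: power_divide sum_divide_distrib[symmetric] power2_eq_square)
  also have "(\<Sum>m<n. (cmod (b m))\<^sup>2) = real n * (\<Sum>j<n. (cmod (v j))\<^sup>2)"
    unfolding b_def by (rule dft_parseval[OF n])
  also have "real n * (\<Sum>j<n. (cmod (v j))\<^sup>2) / real n = (1 * vec_norm n v)\<^sup>2"
    using n by (simp add: vec_norm_power2)
  finally show "vec_norm n (mat_apply n (dft_multiplier n l) v) \<le> 1 * vec_norm n v"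
    by (rule power2_le_imp_le) simp
qed simp

lemma sum_entries_schur_circulant_dft_multiplier:
  assumes n: "n > 0"
  shows "(\<Sum>i<n. \<Sum>j<n. circulant n c i j * dft_multiplier n l i j) = of_nat n * (\<Sum>k<n. c k * l k)"
proof -
  define E where "E i k = omega n (real i * real k)" for i k
  define X where "X k m i j = c k * l m / of_nat n * ((E i k * cnj (E i m)) * (E j m * cnj (E j k)))"
    for k m i j
  have entry: "circulant n c i j * dft_multiplier n l i j = (\<Sum>k<n. \<Sum>m<n. X k m i j)" for i j
  proof -
    have "omega n (real k * (real i - real j)) = E i k * cnj (E j k)" for k
      unfolding E_def by (simp add: cnj_omega omega_add[symmetric] algebra_simps)
    moreover have "omega n (real m * (real j - real i)) = E j m * cnj (E i m)" for m
      unfolding E_def by (simp add: cnj_omega omega_add[symmetric] algebra_simps)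
    ultimately show ?thesis unfolding circulant_def dft_multiplier_def X_def
      by (simp add: sum_product sum_divide_distrib mult_ac)
  qed
  have "(\<Sum>i<n. \<Sum>j<n. circulant n c i j * dft_multiplier n l i j) =
      (\<Sum>i<n. \<Sum>k<n. \<Sum>j<n. \<Sum>m<n. X k m i j)"
    unfolding entry by (rule sum.cong[OF refl], rule sum.swap)
  also have "\<dots> = (\<Sum>k<n. \<Sum>i<n. \<Sum>m<n. \<Sum>j<n. X k m i j)"
    by (subst sum.swap) (intro sum.cong refl sum.swap)
  also have "\<dots> = (\<Sum>k<n. \<Sum>m<n. \<Sum>i<n. \<Sum>j<n. X k m i j)"
    by (intro sum.cong refl sum.swap)
  also have "\<dots> = (\<Sum>k<n. \<Sum>m<n. c k * l m / of_nat n *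
        ((\<Sum>i<n. E i k * cnj (E i m)) * (\<Sum>j<n. E j m * cnj (E j k))))"
    unfolding X_def sum_product by (simp add: sum_distrib_left mult_ac)
  also have "\<dots> = (\<Sum>k<n. \<Sum>m<n. c k * l m / of_nat n *
        ((if k = m then of_nat n else 0) * (if m = k then of_nat n else 0)))"
    unfolding E_def by (intro sum.cong refl) (simp add: omega_orthogonal)
  also have "\<dots> = of_nat n * (\<Sum>k<n. c k * l k)"
    using n by (simp add: if_distrib sum_distrib_left mult_ac cong: if_cong)
  finally show ?thesis .
qed

lemma mult_sgn_cnj: "z * sgn (cnj z) = complex_of_real (cmod z)"
proof (cases "z = 0")
  case False
  have "z * sgn (cnj z) = z * cnj z / complex_of_real (cmod z)"
    by (simp add: sgn_div_norm scaleR_conv_of_real divide_inverse mult_ac)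
  also have "\<dots> = complex_of_real ((cmod z)\<^sup>2 / cmod z)"
    by (simp only: complex_norm_square[symmetric] of_real_divide)
  finally show ?thesis using False by (simp add: power2_eq_square)
qed simp

theorem schur_mult_norm_circulant:
  assumes n: "n > 0"
  shows "schur_mult_norm n (circulant n c) = (\<Sum>k<n. cmod (c k))"
proof (rule order_antisym)
  have bound: "op_norm n (\<lambda>i j. circulant n c i j * R i j) \<le> (\<Sum>k<n. cmod (c k))"
    if "op_norm n R \<le> 1" for R
  proof -
    have "(\<Sum>k<n. cmod (c k)) * op_norm n R \<le> (\<Sum>k<n. cmod (c k))"
      using that by (intro mult_left_le) (auto simp: sum_nonneg)
    with op_norm_schur_circulant_le show ?thesis by (rule order_trans)
  qed
  then show "schur_mult_norm n (circulant n c) \<le> (\<Sum>k<n. cmod (c k))"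
    by (rule schur_mult_norm_le)
  define R where "R = dft_multiplier n (\<lambda>k. sgn (cnj (c k)))"
  have R: "op_norm n R \<le> 1"
    unfolding R_def using n norm_sgn[of "cnj (c _)"] by (intro op_norm_dft_multiplier_le) auto
  have "real n * (\<Sum>k<n. cmod (c k)) = cmod (\<Sum>i<n. \<Sum>j<n. circulant n c i j * R i j)"
    unfolding R_def sum_entries_schur_circulant_dft_multiplier[OF n] mult_sgn_cnj
    by (simp add: norm_mult sum_nonneg flip: of_real_sum)
  also have "\<dots> \<le> real n * op_norm n (\<lambda>i j. circulant n c i j * R i j)"
    by (rule norm_sum_entries_le_op_norm)
  also have "op_norm n (\<lambda>i j. circulant n c i j * R i j) \<le> schur_mult_norm n (circulant n c)"
    using bound R by (rule op_norm_schur_le_schur_mult_norm)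
  finally show "(\<Sum>k<n. cmod (c k)) \<le> schur_mult_norm n (circulant n c)"
    using n by (simp add: mult_le_cancel_left_pos)
qed

section \<open>The shift plus the identity\<close>

lemma shift_plus_id_eq_circulant:
  assumes ij: "i < n" "j < n"
  shows "shift_plus_id n i j = circulant n (\<lambda>k. (1 + omega n (- real k)) / of_nat n) i j"
proof -
  have n: "n > 0" using ij by simp
  have "circulant n (\<lambda>k. (1 + omega n (- real k)) / of_nat n) i j =
     (\<Sum>k<n. omega n (real k * of_int (int i - int j)) + omega n (real k * of_int (int i - int j - 1))) / of_nat n"
    unfolding circulant_def sum_divide_distrib
    by (rule sum.cong) (auto simp: algebra_simps omega_add[symmetric])
  also have "\<dots> = ((if int n dvd (int i - int j) then of_nat n else 0) +
      (if int n dvd (int i - int j - 1) then of_nat n else 0)) / of_nat n"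
    by (simp only: sum.distrib sum_omega[OF n])
  also have "\<dots> = shift_plus_id n i j"
    unfolding int_dvd_diff_iff_eq[OF ij] int_dvd_diff_1_iff_eq_Suc_mod[OF ij] shift_plus_id_def
    using n by auto
  finally show ?thesis by simp
qed

lemma norm_1_plus_cis: "cmod (1 + cis t) = 2 * \<bar>cos (t / 2)\<bar>"
proof -
  have "(1 + cos t)\<^sup>2 + (sin t)\<^sup>2 = 2 + 2 * cos t"
    using sin_cos_squared_add[of t] by (simp add: power2_eq_square algebra_simps)
  also have "\<dots> = (2 * cos (t / 2))\<^sup>2"
    using cos_double_cos[of "t / 2"] by (simp add: power2_eq_square)
  finally have "(1 + cos t)\<^sup>2 + (sin t)\<^sup>2 = (2 * cos (t / 2))\<^sup>2" .
  then have "cmod (1 + cis t) = sqrt ((2 * cos (t / 2))\<^sup>2)" by (simp add: cmod_def)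
  then show ?thesis by (simp only: real_sqrt_abs abs_mult)
qed

lemma schur_mult_norm_shift_plus_id:
  assumes n: "n > 0"
  shows "schur_mult_norm n (shift_plus_id n) = 2 / real n * (\<Sum>k<n. \<bar>cos (real k * pi / real n)\<bar>)"
proof -
  have "cmod ((1 + omega n (- real k)) / of_nat n) = 2 / real n * \<bar>cos (real k * pi / real n)\<bar>" for k
  proof -
    have "cmod ((1 + omega n (- real k)) / of_nat n) = cmod (1 + cis (2 * pi * (- real k) / real n)) / real n"
      unfolding omega_def by (simp add: norm_divide)
    also have "\<dots> = 2 * \<bar>cos (2 * pi * (- real k) / real n / 2)\<bar> / real n"
      by (simp only: norm_1_plus_cis)
    also have "cos (2 * pi * (- real k) / real n / 2) = cos (real k * pi / real n)"
      by (simp add: field_simps)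
    finally show ?thesis by simp
  qed
  then show ?thesis
    using schur_mult_norm_cong[of n "shift_plus_id n"] shift_plus_id_eq_circulant
    by (simp add: schur_mult_norm_circulant[OF n] sum_distrib_left)
qed

section \<open>Trigonometric sums and monotonicity\<close>

lemma sin_half_mult_sum_cos:
  "2 * sin (x / 2) * (\<Sum>k\<le>p. cos (real k * x)) = sin ((real p + 1 / 2) * x) + sin (x / 2)"
proof (induction p)
  case (Suc p)
  have "2 * sin (x / 2) * cos (real (Suc p) * x) =
      sin (x / 2 + real (Suc p) * x) + sin (x / 2 - real (Suc p) * x)"
    using sin_times_cos[of "x / 2" "real (Suc p) * x"] by simp
  also have "x / 2 + real (Suc p) * x = (real (Suc p) + 1 / 2) * x" by (simp add: algebra_simps)
  also have "x / 2 - real (Suc p) * x = - ((real p + 1 / 2) * x)" by (simp add: algebra_simps)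
  finally have "2 * sin (x / 2) * cos (real (Suc p) * x) =
      sin ((real (Suc p) + 1 / 2) * x) - sin ((real p + 1 / 2) * x)" by simp
  with Suc show ?case by (simp add: algebra_simps)
qed simp

lemma sum_abs_cos_upper_half:
  assumes n: "n > 0"
  shows "(\<Sum>k\<in>{n div 2<..<n}. \<bar>cos (real k * pi / real n)\<bar>) =
    (\<Sum>k\<in>{1..n div 2}. \<bar>cos (real k * pi / real n)\<bar>)"
proof -
  define p where "p = n div 2"
  define f where "f k = \<bar>cos (real k * pi / real n)\<bar>" for k :: nat
  have "(\<Sum>k\<in>{p<..<n}. f k) = (\<Sum>j\<in>{1..n-p-1}. f j)"
  proof (rule sym, rule sum.reindex_bij_witness[of _ "\<lambda>k. n - k" "\<lambda>k. n - k"])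
    fix j assume "j \<in> {1..n-p-1}"
    then have "j \<le> n" by auto
    then have "real (n - j) = real n - real j" by (simp add: of_nat_diff)
    then have "real (n - j) * pi / real n = pi - real j * pi / real n"
      using n by (simp add: field_simps)
    then show "f (n - j) = f j" unfolding f_def by simp
  qed auto
  also have "\<dots> = (\<Sum>j\<in>{1..p}. f j)"
  proof (cases "even n")
    case True
    then have "f p = 0" unfolding f_def p_def using n by (auto simp: field_simps)
    moreover have "{1..p} = insert p {1..n-p-1}" "p \<notin> {1..n-p-1}"
      using True n unfolding p_def by auto
    ultimately show ?thesis by simp
  next
    case False
    then have "n - p - 1 = p" unfolding p_def by presburger
    then show ?thesis by simp
  qed
  finally show ?thesis unfolding f_def p_def .
qed

lemma sum_abs_cos_eq_sum_cos:
  assumes n: "n > 0"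
  shows "(\<Sum>k<n. \<bar>cos (real k * pi / real n)\<bar>) = 2 * (\<Sum>k\<le>n div 2. cos (real k * (pi / real n))) - 1"
proof -
  define p where "p = n div 2"
  define f where "f k = \<bar>cos (real k * pi / real n)\<bar>" for k :: nat
  have "{..<n} = {..p} \<union> {p<..<n}" unfolding p_def using n by auto
  then have "(\<Sum>k<n. f k) = (\<Sum>k\<le>p. f k) + (\<Sum>k\<in>{p<..<n}. f k)"
    by (simp add: sum.union_disjoint ivl_disj_int)
  also have "(\<Sum>k\<in>{p<..<n}. f k) = (\<Sum>k\<in>{1..p}. f k)"
    unfolding f_def p_def by (rule sum_abs_cos_upper_half[OF n])
  also have "{..p} = insert 0 {1..p}" by auto
  then have "(\<Sum>k\<le>p. f k) + (\<Sum>k\<in>{1..p}. f k) = 2 * (\<Sum>k\<le>p. f k) - 1"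
    by (simp add: f_def)
  also have "(\<Sum>k\<le>p. f k) = (\<Sum>k\<le>p. cos (real k * (pi / real n)))"
  proof (rule sum.cong[OF refl])
    fix k assume "k \<in> {..p}"
    then have "real k * pi / real n \<le> pi / 2" using n unfolding p_def by (simp add: field_simps)
    moreover have "0 \<le> real k * pi / real n" by simp
    ultimately have "0 \<le> cos (real k * pi / real n)"
      using pi_gt_zero by (intro cos_ge_zero) linarith+
    then show "f k = cos (real k * (pi / real n))" unfolding f_def by simp
  qed
  finally show ?thesis unfolding f_def p_def .
qed

lemma sum_abs_cos_closed_form:
  assumes n: "n > 0"
  shows "2 / real n * (\<Sum>k<n. \<bar>cos (real k * pi / real n)\<bar>) =
    2 * sin ((real (n div 2) + 1 / 2) * (pi / real n)) / (real n * sin (pi / (2 * real n)))"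
proof -
  define x where "x = pi / real n"
  have "0 < sin (x / 2)" unfolding x_def using n
    by (intro sin_gt_zero) (auto simp: field_simps)
  then have sum_cos: "2 * (\<Sum>k\<le>n div 2. cos (real k * x)) - 1 =
      sin ((real (n div 2) + 1 / 2) * x) / sin (x / 2)"
    using sin_half_mult_sum_cos[of x "n div 2"] by (simp add: field_simps)
  have half: "pi / (2 * real n) = x / 2" unfolding x_def by simp
  show ?thesis
    unfolding sum_abs_cos_eq_sum_cos[OF n] half x_def[symmetric] sum_cos by simp
qed

lemma sum_abs_cos_odd:
  assumes "odd n"
  shows "2 / real n * (\<Sum>k<n. \<bar>cos (real k * pi / real n)\<bar>) = 2 / (real n * sin (pi / (2 * real n)))"
proof -
  obtain p where p: "n = 2 * p + 1" using assms oddE by blast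
  have angle: "(real (n div 2) + 1 / 2) * (pi / real n) = pi / 2" unfolding p by (simp add: field_simps)
  show ?thesis unfolding sum_abs_cos_closed_form[OF odd_pos[OF assms]] angle by simp
qed

lemma sum_abs_cos_even:
  assumes "even n" "n > 0"
  shows "2 / real n * (\<Sum>k<n. \<bar>cos (real k * pi / real n)\<bar>) =
    2 * cos (pi / (2 * real n)) / (real n * sin (pi / (2 * real n)))"
proof -
  obtain p where p: "n = 2 * p" using assms(1) by blast
  have angle: "(real (n div 2) + 1 / 2) * (pi / real n) = pi / 2 + pi / (2 * real n)"
    using assms(2) unfolding p by (simp add: field_simps)
  show ?thesis unfolding sum_abs_cos_closed_form[OF assms(2)] angle by (simp add: sin_add)
qed

lemma x_cos_less_sin:
  assumes "0 < x" "x \<le> pi / 2"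
  shows "x * cos x < sin x"
proof -
  have "(\<lambda>x. sin x - x * cos x) 0 < (\<lambda>x. sin x - x * cos x) x"
  proof (rule DERIV_pos_imp_increasing_open[OF assms(1)])
    fix y assume y: "0 < y" "y < x"
    have "((\<lambda>x. sin x - x * cos x) has_real_derivative y * sin y) (at y)"
      by (auto intro!: derivative_eq_intros)
    moreover have "0 < y * sin y"
      using y assms sin_gt_zero[of y] by (simp add: pi_half_less_two)
    ultimately show "\<exists>d. ((\<lambda>x. sin x - x * cos x) has_real_derivative d) (at y) \<and> 0 < d" by blast
  qed (intro continuous_intros)
  then show ?thesis by simp
qed

lemma sin_over_x_strict_decreasing:
  assumes "0 < a" "a < b" "b \<le> pi / 2"
  shows "sin b / b < sin a / a"
proof (rule DERIV_neg_imp_decreasing[OF assms(2)])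
  fix x assume x: "a \<le> x" "x \<le> b"
  have "((\<lambda>x. sin x / x) has_real_derivative (x * cos x - sin x) / x\<^sup>2) (at x)"
    using x assms by (auto intro!: derivative_eq_intros simp: power2_eq_square)
  moreover have "(x * cos x - sin x) / x\<^sup>2 < 0"
    using x_cos_less_sin[of x] x assms by (intro divide_neg_pos) auto
  ultimately show "\<exists>y. ((\<lambda>x. sin x / x) has_real_derivative y) (at x) \<and> y < 0" by blast
qed

lemma sin_mult_cos_less:
  assumes "0 < x" "x < pi / 2"
  shows "sin x * cos x < x"
proof -
  have "cos x < 1" using cos_monotone_0_pi[of 0 x] assms by simp
  moreover have "0 < sin x" using sin_gt_zero[of x] assms by simp
  ultimately have "sin x * cos x < sin x" by simp
  also have "\<dots> \<le> x" using sin_x_le_x[of x] assms by simp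
  finally show ?thesis .
qed

lemma x_cot_strict_decreasing:
  assumes "0 < a" "a < b" "b < pi / 2"
  shows "b * cos b / sin b < a * cos a / sin a"
proof (rule DERIV_neg_imp_decreasing[OF assms(2)])
  fix x assume x: "a \<le> x" "x \<le> b"
  have sin_x: "0 < sin x" using sin_gt_zero[of x] x assms by simp
  have "((\<lambda>x. x * cos x / sin x) has_real_derivative
      ((cos x - x * sin x) * sin x - x * cos x * cos x) / (sin x)\<^sup>2) (at x)"
    using sin_x by (auto intro!: derivative_eq_intros simp: power2_eq_square)
  moreover have "(cos x - x * sin x) * sin x - x * cos x * cos x = sin x * cos x - x"
    using sin_cos_squared_add[of x] by (simp add: algebra_simps power2_eq_square flip: distrib_left)
  moreover have "sin x * cos x - x < 0" using sin_mult_cos_less[of x] x assms by simp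
  ultimately show "\<exists>y. ((\<lambda>x. x * cos x / sin x) has_real_derivative y) (at x) \<and> y < 0"
    using sin_x by (metis divide_neg_pos zero_less_power)
qed

lemma inverse_n_sin_strict_decreasing:
  assumes "0 < n" "n < m"
  shows "2 / (real m * sin (pi / (2 * real m))) < 2 / (real n * sin (pi / (2 * real n)))"
proof -
  define a b where "a = pi / (2 * real m)" and "b = pi / (2 * real n)"
  have ab: "0 < a" "a < b" "b \<le> pi / 2"
    unfolding a_def b_def using assms by (auto simp: field_simps)
  have eq: "2 / (real n * sin b) = 4 / pi / (sin b / b)" "2 / (real m * sin a) = 4 / pi / (sin a / a)"
    unfolding a_def b_def using assms by (simp_all add: field_simps)
  have pos: "0 < sin b / b" "0 < sin a / a" using ab sin_gt_zero[of b] sin_gt_zero[of a] by simp_all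
  have "4 / pi / (sin a / a) < 4 / pi / (sin b / b)"
    using sin_over_x_strict_decreasing[OF ab] pos by (intro divide_strict_left_mono mult_pos_pos) simp_all
  then show ?thesis unfolding a_def[symmetric] b_def[symmetric] eq .
qed

lemma cos_div_n_sin_strict_increasing:
  assumes "1 < n" "n < m"
  shows "2 * cos (pi / (2 * real n)) / (real n * sin (pi / (2 * real n))) <
    2 * cos (pi / (2 * real m)) / (real m * sin (pi / (2 * real m)))"
proof -
  define a b where "a = pi / (2 * real m)" and "b = pi / (2 * real n)"
  have ab: "0 < a" "a < b" "b < pi / 2"
    unfolding a_def b_def using assms by (auto simp: field_simps)
  have eq: "2 * cos b / (real n * sin b) = 4 / pi * (b * cos b / sin b)"
    "2 * cos a / (real m * sin a) = 4 / pi * (a * cos a / sin a)"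
    unfolding a_def b_def using assms by (simp_all add: field_simps)
  have "4 / pi * (b * cos b / sin b) < 4 / pi * (a * cos a / sin a)"
    using x_cot_strict_decreasing[OF ab] by (intro mult_strict_left_mono) simp_all
  then show ?thesis unfolding a_def[symmetric] b_def[symmetric] eq .
qed

lemma schur_mult_norm_shift_plus_id_odd:
  assumes "odd n"
  shows "schur_mult_norm n (shift_plus_id n) = 2 / (real n * sin (pi / (2 * real n)))"
  using schur_mult_norm_shift_plus_id[OF odd_pos[OF assms]] sum_abs_cos_odd[OF assms] by simp

lemma schur_mult_norm_shift_plus_id_even:
  assumes "even n" "n > 0"
  shows "schur_mult_norm n (shift_plus_id n) =
    2 * cos (pi / (2 * real n)) / (real n * sin (pi / (2 * real n)))"
  using schur_mult_norm_shift_plus_id[OF assms(2)] sum_abs_cos_even[OF assms] by simp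

lemma tendsto_schur_mult_norm_shift_plus_id:
  "(\<lambda>n. schur_mult_norm n (shift_plus_id n)) \<longlonglongrightarrow> 4 / pi"
proof -
  define lo hi where "lo n = 2 * cos (pi / (2 * real n)) / (real n * sin (pi / (2 * real n)))"
    and "hi n = 2 / (real n * sin (pi / (2 * real n)))" for n :: nat
  have limits: "lo \<longlonglongrightarrow> 4 / pi" "hi \<longlonglongrightarrow> 4 / pi"
    unfolding lo_def[abs_def] hi_def[abs_def] by real_asymp+
  have bounds: "lo n \<le> schur_mult_norm n (shift_plus_id n) \<and> schur_mult_norm n (shift_plus_id n) \<le> hi n"
    if "n > 0" for n
  proof -
    have "0 < real n * sin (pi / (2 * real n))"
      using that by (intro mult_pos_pos sin_gt_zero) (auto simp: field_simps)
    then have "lo n \<le> hi n" unfolding lo_def hi_def by (intro divide_right_mono) auto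
    then show ?thesis
      using that schur_mult_norm_shift_plus_id_even schur_mult_norm_shift_plus_id_odd
      unfolding lo_def hi_def by (cases "even n") auto
  qed
  show ?thesis
  proof (rule tendsto_sandwich[OF _ _ limits])
    show "\<forall>\<^sub>F n in sequentially. lo n \<le> schur_mult_norm n (shift_plus_id n)"
      and "\<forall>\<^sub>F n in sequentially. schur_mult_norm n (shift_plus_id n) \<le> hi n"
      using bounds by (auto intro!: eventually_sequentiallyI[of 1])
  qed
qed

theorem mainTheorem14:
  shows "(\<forall>n::nat. n \<ge> 3 \<longrightarrow>
            schur_mult_norm n (shift_plus_id n) = 2 / real n * (\<Sum>k<n. \<bar>cos (real k * pi / real n)\<bar>)
          \<and> (even n \<longrightarrow> schur_mult_norm n (shift_plus_id n)
                = 2 * cos (pi / (2 * real n)) / (real n * sin (pi / (2 * real n))))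
          \<and> (odd n \<longrightarrow> schur_mult_norm n (shift_plus_id n)
                = 2 / (real n * sin (pi / (2 * real n)))))
       \<and> (\<lambda>n. schur_mult_norm n (shift_plus_id n)) \<longlonglongrightarrow> 4 / pi
       \<and> (\<forall>n::nat. n \<ge> 3 \<longrightarrow> odd n \<longrightarrow>
            schur_mult_norm (n + 2) (shift_plus_id (n + 2)) < schur_mult_norm n (shift_plus_id n))
       \<and> (\<forall>n::nat. n \<ge> 3 \<longrightarrow> even n \<longrightarrow>
            schur_mult_norm n (shift_plus_id n) < schur_mult_norm (n + 2) (shift_plus_id (n + 2)))"
proof (intro conjI allI impI)
  fix n :: nat
  assume "n \<ge> 3"
  then show "schur_mult_norm n (shift_plus_id n) = 2 / real n * (\<Sum>k<n. \<bar>cos (real k * pi / real n)\<bar>)"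
    by (simp add: schur_mult_norm_shift_plus_id)
  {
    assume "even n"
    with \<open>n \<ge> 3\<close> show "schur_mult_norm n (shift_plus_id n) =
        2 * cos (pi / (2 * real n)) / (real n * sin (pi / (2 * real n)))"
      by (simp add: schur_mult_norm_shift_plus_id_even)
    from \<open>even n\<close> \<open>n \<ge> 3\<close>
    show "schur_mult_norm n (shift_plus_id n) < schur_mult_norm (n + 2) (shift_plus_id (n + 2))"
      using cos_div_n_sin_strict_increasing[of n "n + 2"] by (simp add: schur_mult_norm_shift_plus_id_even)
  }
  {
    assume "odd n"
    then show "schur_mult_norm n (shift_plus_id n) = 2 / (real n * sin (pi / (2 * real n)))"
      by (rule schur_mult_norm_shift_plus_id_odd)
    from \<open>odd n\<close> \<open>n \<ge> 3\<close>
    show "schur_mult_norm (n + 2) (shift_plus_id (n + 2)) < schur_mult_norm n (shift_plus_id n)"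
      using inverse_n_sin_strict_decreasing[of n "n + 2"] by (simp add: schur_mult_norm_shift_plus_id_odd)
  }
next
  show "(\<lambda>n. schur_mult_norm n (shift_plus_id n)) \<longlonglongrightarrow> 4 / pi"
    by (rule tendsto_schur_mult_norm_shift_plus_id)
qed

end
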